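(* If a topological space $X$ has an $\omega$-deep $\pi$-base, then $X\times\mathbb{Q}$ is $NWD$-separable.
   Context: A $\pi$-base $\mathcal{U}$ is $\omega$-deep if for every decreasing sequence $\{U_n\}_{n<\omega}\subseteq\mathcal{U}$ the set $\bigcap_{n<\omega}U_n$ has nonempty interior. $\mathbb{Q}$ carries its usual topology. A space $Y$ is $NWD$-separable if for every sequence $\{D_n:n<\omega\}$ of dense subsets of $Y$ there are nowhere dense sets $E_n\subseteq D_n$ such that $\bigcup_{n<\omega}E_n$ is dense in $Y$. *)

theory Defs
  imports "HOL-Analysis.Analysis"
begin

definition pi_base :: "'a topology \<Rightarrow> 'a set set \<Rightarrow> bool" where
  "pi_base X \<U> \<longleftrightarrow>
     (\<forall>U\<in>\<U>. openin X U \<and> U \<noteq> {}) \<and>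
     (\<forall>V. openin X V \<and> V \<noteq> {} \<longrightarrow> (\<exists>U\<in>\<U>. U \<subseteq> V))"

definition omega_deep :: "'a topology \<Rightarrow> 'a set set \<Rightarrow> bool" where
  "omega_deep X \<U> \<longleftrightarrow>
     (\<forall>U :: nat \<Rightarrow> 'a set. (\<forall>n. U n \<in> \<U>) \<and> (\<forall>n. U (Suc n) \<subseteq> U n)
        \<longrightarrow> X interior_of (\<Inter>n. U n) \<noteq> {})"

definition dense_set :: "'a topology \<Rightarrow> 'a set \<Rightarrow> bool" where
  "dense_set X D \<longleftrightarrow> D \<subseteq> topspace X \<and> X closure_of D = topspace X"

definition nowhere_dense :: "'a topology \<Rightarrow> 'a set \<Rightarrow> bool" where
  "nowhere_dense X E \<longleftrightarrow> E \<subseteq> topspace X \<and> X interior_of (X closure_of E) = {}"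

definition NWD_separable :: "'a topology \<Rightarrow> bool" where
  "NWD_separable Y \<longleftrightarrow>
     (\<forall>D :: nat \<Rightarrow> 'a set. (\<forall>n. dense_set Y (D n)) \<longrightarrow>
        (\<exists>E :: nat \<Rightarrow> 'a set. (\<forall>n. E n \<subseteq> D n \<and> nowhere_dense Y (E n))
            \<and> dense_set Y (\<Union>n. E n)))"

definition rat_topology :: "real topology" where
  "rat_topology = subtopology euclideanreal \<rat>"

end

theory Submission
  imports Defs
begin

text \<open>Enumerate \<open>\<rat>\<close> as \<open>q\<^sub>k\<close> and a \<pi>-base of \<open>\<rat>\<close> as \<open>P\<^sub>n\<close>. Given dense sets \<open>D\<^sub>n\<close>,
  let \<open>A\<^sub>n\<^sub>k\<close> be the section of \<open>D\<^sub>n\<close> at \<open>q\<^sub>k\<close> if \<open>q\<^sub>k \<in> P\<^sub>n\<close> (empty otherwise), and obtain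
  \<open>B\<^sub>n\<^sub>k\<close> from it by removing the closure of the earlier sections. The sets
  \<open>E\<^sub>n = \<Union>\<^sub>k B\<^sub>n\<^sub>k \<times> {q\<^sub>k} \<subseteq> D\<^sub>n\<close> work. The closure of \<open>\<Union>\<^sub>k B\<^sub>n\<^sub>k\<close> still contains every
  \<open>A\<^sub>n\<^sub>k\<close>, which makes \<open>\<Union>\<^sub>n E\<^sub>n\<close> dense. If \<open>E\<^sub>n\<close> were dense in an open box \<open>V \<times> J\<close>, then,
  since \<open>J\<close> minus finitely many points is still open and nonempty, no \<open>B\<^sub>n\<^sub>k\<close> could be dense in
  an open subset of \<open>V\<close>; descending along the \<omega>-deep \<pi>-base yields a nonempty open \<open>W \<subseteq> V\<close>
  missing every \<open>B\<^sub>n\<^sub>k\<close>, although \<open>W \<times> J\<close> must meet \<open>E\<^sub>n\<close>.\<close>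

definition closure_disjointed :: "'a topology \<Rightarrow> (nat \<Rightarrow> 'a set) \<Rightarrow> nat \<Rightarrow> 'a set" where
  "closure_disjointed X A k = A k - X closure_of (\<Union>j<k. A j)"

lemma closure_disjointed_subset: "closure_disjointed X A k \<subseteq> A k"
  by (auto simp: closure_disjointed_def)

lemma closure_disjointed_Int_closure_of:
  assumes "j < k"
  shows "closure_disjointed X A k \<inter> X closure_of (closure_disjointed X A j) = {}"
proof -
  have "closure_disjointed X A j \<subseteq> (\<Union>i<k. A i)"
    using assms closure_disjointed_subset[of X A j] by auto
  then have "X closure_of (closure_disjointed X A j) \<subseteq> X closure_of (\<Union>i<k. A i)"
    by (rule closure_of_mono)
  then show ?thesis by (auto simp: closure_disjointed_def)
qed

lemma subset_closure_of_Union_closure_disjointed: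
  assumes "\<And>k. A k \<subseteq> topspace X"
  shows "A k \<subseteq> X closure_of (\<Union>k. closure_disjointed X A k)"
proof (induction k rule: less_induct)
  case (less k)
  let ?C = "X closure_of (\<Union>k. closure_disjointed X A k)"
  have "(\<Union>k. closure_disjointed X A k) \<subseteq> topspace X"
    by (intro UN_least order_trans[OF closure_disjointed_subset assms])
  then have "closure_disjointed X A k \<subseteq> ?C" using closure_of_subset by blast
  moreover have "(\<Union>j<k. A j) \<subseteq> ?C" using less by blast
  then have "X closure_of (\<Union>j<k. A j) \<subseteq> ?C"
    by (metis closure_of_closure_of closure_of_mono)
  ultimately show ?case by (auto simp: closure_disjointed_def)
qed

lemma omega_deep_avoids_sequence:
  fixes B :: "nat \<Rightarrow> 'a set"
  assumes pb: "pi_base X \<U>" and od: "omega_deep X \<U>"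
    and V: "openin X V" "V \<noteq> {}"
    and not_dense:
      "\<And>U k. openin X U \<Longrightarrow> U \<noteq> {} \<Longrightarrow> U \<subseteq> V \<Longrightarrow> \<not> U \<subseteq> X closure_of (B k)"
  shows "\<exists>W. openin X W \<and> W \<noteq> {} \<and> W \<subseteq> V \<and> (\<forall>k. W \<inter> B k = {})"
proof -
  have "\<exists>U'\<in>\<U>. U' \<subseteq> U \<and> U' \<inter> B k = {}" if "U \<in> \<U>" "U \<subseteq> V" for U k
  proof -
    have U: "openin X U" "U \<noteq> {}" using pb that(1) unfolding pi_base_def by blast+
    have "openin X (U - X closure_of (B k))" using U(1) by (simp add: openin_diff)
    moreover have "U - X closure_of (B k) \<noteq> {}" using not_dense[OF U that(2)] by blast
    ultimately obtain U' where U': "U' \<in> \<U>" "U' \<subseteq> U - X closure_of (B k)"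
      using pb unfolding pi_base_def by blast
    then have "U' \<subseteq> topspace X" using openin_subset[OF U(1)] by blast
    then show ?thesis
      using U' closure_of_subset_Int[of X "B k"] by blast
  qed
  then obtain f where f:
    "\<And>U k. U \<in> \<U> \<Longrightarrow> U \<subseteq> V \<Longrightarrow> f U k \<in> \<U> \<and> f U k \<subseteq> U \<and> f U k \<inter> B k = {}"
    by metis
  obtain U0 where U0: "U0 \<in> \<U>" "U0 \<subseteq> V" using pb V unfolding pi_base_def by blast
  define S where "S = rec_nat U0 (\<lambda>k Sk. f Sk k)"
  have S_0: "S 0 = U0" and S_Suc_eq: "S (Suc k) = f (S k) k" for k
    by (simp_all add: S_def)
  have S: "S k \<in> \<U> \<and> S k \<subseteq> V" for k
  proof (induction k)
    case 0
    show ?case using U0 S_0 by simp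
  next
    case (Suc k)
    then show ?case using f[of "S k" k] by (auto simp: S_Suc_eq)
  qed
  have S_Suc: "S (Suc k) \<subseteq> S k \<and> S (Suc k) \<inter> B k = {}" for k
    using f S by (simp add: S_Suc_eq)
  define W where "W = X interior_of (\<Inter>k. S k)"
  have "W \<noteq> {}" using od S S_Suc unfolding omega_deep_def W_def by blast
  moreover have W_S: "W \<subseteq> S k" for k
    using interior_of_subset[of X "\<Inter>k. S k"] unfolding W_def by blast
  moreover have "openin X W" by (simp add: W_def)
  moreover have "W \<subseteq> V" using W_S[of 0] S[of 0] by blast
  moreover have "W \<inter> B k = {}" for k using W_S[of "Suc k"] S_Suc[of k] by blast
  ultimately show ?thesis by blast
qed

lemma openin_diff_finite:
  assumes "t1_space Z" and crowded: "\<And>J. openin Z J \<Longrightarrow> J \<noteq> {} \<Longrightarrow> infinite J"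
    and J: "openin Z J" "J \<noteq> {}" and F: "finite F" "F \<subseteq> topspace Z"
  shows "openin Z (J - F)" "J - F \<noteq> {}"
proof -
  show "openin Z (J - F)"
    using assms(1) F by (intro openin_diff[OF J(1)]) (simp add: t1_space_closedin_finite)
  show "J - F \<noteq> {}"
    using crowded[OF J] F(1) finite_subset by auto
qed

lemma nowhere_dense_Union_Times_sequence:
  fixes B :: "nat \<Rightarrow> 'a set" and q :: "nat \<Rightarrow> 'b"
  assumes pb: "pi_base X \<U>" and od: "omega_deep X \<U>" and "t1_space Z"
    and crowded: "\<And>J. openin Z J \<Longrightarrow> J \<noteq> {} \<Longrightarrow> infinite J"
    and q: "range q \<subseteq> topspace Z"
    and B: "\<And>k. B k \<subseteq> topspace X"
    and separated: "\<And>j k. j < k \<Longrightarrow> B k \<inter> X closure_of (B j) = {}"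
  shows "nowhere_dense (prod_topology X Z) (\<Union>k. B k \<times> {q k})"
proof -
  let ?Y = "prod_topology X Z" and ?E = "\<Union>k. B k \<times> {q k}"
  have "T = {}" if T: "openin ?Y T" "T \<subseteq> ?Y closure_of ?E" for T
  proof (rule ccontr)
    assume "T \<noteq> {}"
    then obtain x z where "(x, z) \<in> T" by auto
    then obtain V J where VJ: "openin X V" "openin Z J" "x \<in> V" "z \<in> J" "V \<times> J \<subseteq> T"
      using T(1) unfolding openin_prod_topology_alt by meson
    have meets: "\<exists>k. W \<inter> B k \<noteq> {} \<and> q k \<in> J'"
      if "openin X W" "openin Z J'" "W \<noteq> {}" "J' \<noteq> {}" "W \<subseteq> V" "J' \<subseteq> J" for W J'
    proof -
      have "openin ?Y (W \<times> J')" using that(1,2) by (simp add: openin_prod_Times_iff)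
      moreover have "W \<times> J' \<subseteq> ?Y closure_of ?E" using that(5,6) VJ(5) T(2) by blast
      ultimately have "W \<times> J' \<inter> ?E \<noteq> {}"
        using that(3,4) openin_Int_closure_of_eq_empty[of ?Y "W \<times> J'" ?E] by auto
      then show ?thesis by blast
    qed
    have not_dense: "\<not> U \<subseteq> X closure_of (B k)" if U: "openin X U" "U \<noteq> {}" "U \<subseteq> V" for U k
    proof
      assume U_sub: "U \<subseteq> X closure_of (B k)"
      have "J \<noteq> {}" using VJ(4) by blast
      moreover have "finite (q ` {..k})" "q ` {..k} \<subseteq> topspace Z" using q by auto
      ultimately have J'_open: "openin Z (J - q ` {..k})" and J'_ne: "J - q ` {..k} \<noteq> {}"
        using openin_diff_finite[OF \<open>t1_space Z\<close> crowded VJ(2)] by blast+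
      obtain j where j: "U \<inter> B j \<noteq> {}" "q j \<in> J - q ` {..k}"
        using meets[OF U(1) J'_open U(2) J'_ne U(3) Diff_subset] by blast
      then have "k < j" by (auto simp: not_less)
      then have "B j \<inter> X closure_of (B k) = {}" by (rule separated)
      then show False using j(1) U_sub by blast
    qed
    have "V \<noteq> {}" using VJ(3) by blast
    with pb od VJ(1) have "\<exists>W. openin X W \<and> W \<noteq> {} \<and> W \<subseteq> V \<and> (\<forall>k. W \<inter> B k = {})"
      using not_dense by (rule omega_deep_avoids_sequence)
    then obtain W where "openin X W" "W \<noteq> {}" "W \<subseteq> V" "\<forall>k. W \<inter> B k = {}"
      by blast
    moreover have "J \<noteq> {}" using VJ(4) by blast
    ultimately show False using meets[of W J] VJ(2) by blast
  qed
  then have "?Y interior_of (?Y closure_of ?E) = {}"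
    unfolding interior_of_eq_empty by blast
  moreover have "?E \<subseteq> topspace ?Y" using B q by auto
  ultimately show ?thesis unfolding nowhere_dense_def by blast
qed

lemma closure_disjointed_sections_meet:
  assumes D: "dense_set (prod_topology X Z) D" and q: "range q = topspace Z"
    and P: "openin Z P" "P \<noteq> {}" and V: "openin X V" "V \<noteq> {}"
  shows "\<exists>k y. q k \<in> P \<and> y \<in> V \<and>
    y \<in> closure_disjointed X (\<lambda>k. {x. (x, q k) \<in> D \<and> q k \<in> P}) k"
proof -
  let ?A = "\<lambda>k. {x. (x, q k) \<in> D \<and> q k \<in> P}"
  have D_sub: "D \<subseteq> topspace X \<times> topspace Z" using D by (simp add: dense_set_def)
  then have A_sub: "?A k \<subseteq> topspace X" for k by blast
  have "openin (prod_topology X Z) (V \<times> P)" "V \<times> P \<noteq> {}"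
    using P V by (auto simp: openin_prod_Times_iff)
  moreover have "prod_topology X Z closure_of D = topspace (prod_topology X Z)"
    using D by (simp add: dense_set_def)
  ultimately have "D \<inter> (V \<times> P) \<noteq> {}"
    unfolding dense_intersects_open by blast
  then obtain x z where xz: "(x, z) \<in> D" "x \<in> V" "z \<in> P"
    by blast
  then obtain k where "z = q k"
    using D_sub q by (metis SigmaD2 rangeE subsetD)
  with xz have "x \<in> ?A k" by simp
  then have "x \<in> X closure_of (\<Union>k. closure_disjointed X ?A k)"
    using subset_closure_of_Union_closure_disjointed[where A = ?A, OF A_sub] by blast
  then obtain j y where y: "y \<in> closure_disjointed X ?A j" "y \<in> V"
    using V(1) xz(2) unfolding in_closure_of by blast
  moreover have "q j \<in> P"
    using y(1) closure_disjointed_subset[of X ?A j] by auto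
  ultimately show ?thesis by blast
qed

theorem NWD_separable_prod_sequence_pi_base:
  fixes q :: "nat \<Rightarrow> 'b" and P :: "nat \<Rightarrow> 'b set"
  assumes pb: "pi_base X \<U>" and od: "omega_deep X \<U>" and "t1_space Z"
    and crowded: "\<And>J. openin Z J \<Longrightarrow> J \<noteq> {} \<Longrightarrow> infinite J"
    and q: "range q = topspace Z"
    and P: "pi_base Z (range P)"
  shows "NWD_separable (prod_topology X Z)"
  unfolding NWD_separable_def
proof (intro allI impI)
  let ?Y = "prod_topology X Z"
  fix D :: "nat \<Rightarrow> ('a \<times> 'b) set"
  assume D: "\<forall>n. dense_set ?Y (D n)"
  define A where "A n k = {x. (x, q k) \<in> D n \<and> q k \<in> P n}" for n k
  define E where "E n = (\<Union>k. closure_disjointed X (A n) k \<times> {q k})" for n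
  have D_sub: "D n \<subseteq> topspace X \<times> topspace Z" for n
    using D by (simp add: dense_set_def)
  then have A_sub: "A n k \<subseteq> topspace X" for n k
    by (auto simp: A_def)
  have E_sub: "E n \<subseteq> D n" for n
    by (auto simp: E_def A_def closure_disjointed_def)
  have B_sub: "closure_disjointed X (A n) k \<subseteq> topspace X" for n k
    using closure_disjointed_subset A_sub by (rule order_trans)
  have nwd: "nowhere_dense ?Y (E n)" for n
    unfolding E_def
  proof (rule nowhere_dense_Union_Times_sequence[OF pb od \<open>t1_space Z\<close>])
    show "infinite J" if "openin Z J" "J \<noteq> {}" for J using crowded that .
    show "range q \<subseteq> topspace Z" using q by simp
  qed (rule B_sub, rule closure_disjointed_Int_closure_of)
  have "(\<Union>n. E n) \<inter> T \<noteq> {}" if T: "openin ?Y T" "T \<noteq> {}" for T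
  proof -
    obtain x z where "(x, z) \<in> T" using T(2) by auto
    then obtain V J where VJ: "openin X V" "openin Z J" "x \<in> V" "z \<in> J" "V \<times> J \<subseteq> T"
      using T(1) unfolding openin_prod_topology_alt by meson
    have "J \<noteq> {}" using VJ(4) by blast
    then obtain n where "P n \<subseteq> J"
      using P VJ(2) unfolding pi_base_def by blast
    have "openin Z (P n)" "P n \<noteq> {}" using P unfolding pi_base_def by blast+
    moreover have "V \<noteq> {}" using VJ(3) by blast
    ultimately obtain k y where "q k \<in> P n" "y \<in> V" "y \<in> closure_disjointed X (A n) k"
      using closure_disjointed_sections_meet[OF D[rule_format] q _ _ VJ(1)]
      unfolding A_def by blast
    then have "(y, q k) \<in> T \<inter> E n"
      using \<open>P n \<subseteq> J\<close> VJ(5) by (auto simp: E_def)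
    then show ?thesis by blast
  qed
  moreover have "(\<Union>n. E n) \<subseteq> topspace ?Y"
    using nwd unfolding nowhere_dense_def by blast
  ultimately have "dense_set ?Y (\<Union>n. E n)"
    unfolding dense_set_def dense_intersects_open by blast
  with E_sub nwd
  show "\<exists>E. (\<forall>n. E n \<subseteq> D n \<and> nowhere_dense ?Y (E n)) \<and> dense_set ?Y (\<Union>n. E n)"
    by blast
qed

lemma real_islimpt_Rats: "(q::real) islimpt \<rat>"
  unfolding islimpt_approachable
proof (intro allI impI)
  fix e :: real
  assume "0 < e"
  then obtain r where "r \<in> \<rat>" "q < r" "r < q + e"
    using Rats_dense_in_real by (metis less_add_same_cancel1)
  then show "\<exists>r\<in>\<rat>. r \<noteq> q \<and> dist r q < e"
    by (intro bexI[of _ r]) (auto simp: dist_real_def)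
qed

lemma infinite_openin_rat_topology:
  assumes "openin rat_topology J" "J \<noteq> {}"
  shows "infinite J"
proof -
  obtain T q where T: "open T" "J = T \<inter> \<rat>" "q \<in> J"
    using assms by (auto simp: rat_topology_def openin_subtopology)
  then obtain e where "e > 0" "ball q e \<subseteq> T"
    using open_contains_ball by blast
  moreover have "infinite (\<rat> \<inter> ball q e)"
    using real_islimpt_Rats \<open>e > 0\<close> islimpt_eq_infinite_ball by blast
  ultimately show ?thesis
    using T(2) by (metis Int_commute Int_mono finite_subset order_refl)
qed

lemma t1_space_rat_topology: "t1_space rat_topology"
  by (simp add: rat_topology_def t1_space_subtopology t1_space_euclidean)

lemma topspace_rat_topology: "topspace rat_topology = \<rat>"
  by (simp add: rat_topology_def)

lemma range_from_nat_into_Rats: "range (from_nat_into \<rat>) = (\<rat> :: real set)"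
  using Rats_0 countable_rat by (intro range_from_nat_into) auto

lemma openin_rat_topology_ball: "openin rat_topology (ball c r \<inter> \<rat>)"
  by (auto simp: rat_topology_def openin_subtopology)

lemma rat_topology_sequence_pi_base: "\<exists>P :: nat \<Rightarrow> real set. pi_base rat_topology (range P)"
proof -
  define P :: "nat \<Rightarrow> real set" where "P n = (case prod_decode n of (a, m) \<Rightarrow>
    ball (from_nat_into \<rat> a) (inverse (Suc m)) \<inter> \<rat>)" for n
  have P_open: "openin rat_topology (P n)" for n
    by (simp add: P_def openin_rat_topology_ball split: prod.split)
  have P_nonempty: "P n \<noteq> {}" for n
  proof -
    obtain a m where "prod_decode n = (a, m)" by (cases "prod_decode n")
    moreover have "from_nat_into \<rat> a \<in> (\<rat> :: real set)"
      using Rats_0 by (metis empty_iff from_nat_into)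
    ultimately have "from_nat_into \<rat> a \<in> P n" by (simp add: P_def)
    then show ?thesis by blast
  qed
  have P_inside: "\<exists>n. P n \<subseteq> J" if J: "openin rat_topology J" "z \<in> J" for J z
  proof -
    obtain T where T: "open T" "J = T \<inter> \<rat>"
      using J(1) by (auto simp: rat_topology_def openin_subtopology)
    then obtain e where "e > 0" "ball z e \<subseteq> T"
      using J(2) open_contains_ball by blast
    moreover obtain m where "inverse (real (Suc m)) < e"
      using reals_Archimedean[OF \<open>e > 0\<close>] by blast
    ultimately have "ball z (inverse (Suc m)) \<inter> \<rat> \<subseteq> J"
      using T(2) ball_subset_ball_iff[of z "inverse (Suc m)" z e] by auto
    moreover obtain a where "from_nat_into \<rat> a = z"
      using J(2) T(2) range_from_nat_into_Rats by (metis IntD2 rangeE)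
    ultimately have "P (prod_encode (a, m)) \<subseteq> J" by (simp add: P_def)
    then show ?thesis by blast
  qed
  have "pi_base rat_topology (range P)"
    unfolding pi_base_def
  proof (intro conjI)
    show "\<forall>U\<in>range P. openin rat_topology U \<and> U \<noteq> {}"
      using P_open P_nonempty by auto
    show "\<forall>J. openin rat_topology J \<and> J \<noteq> {} \<longrightarrow> (\<exists>U\<in>range P. U \<subseteq> J)"
    proof (intro allI impI)
      fix J assume J: "openin rat_topology J \<and> J \<noteq> {}"
      then obtain z where "z \<in> J" by blast
      then obtain n where "P n \<subseteq> J" using J P_inside by blast
      then show "\<exists>U\<in>range P. U \<subseteq> J" by blast
    qed
  qed
  then show ?thesis by blast
qed

theorem lemma4p2:
  fixes X :: "'a topology"
  assumes "\<exists>\<U>. pi_base X \<U> \<and> omega_deep X \<U>"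
  shows "NWD_separable (prod_topology X rat_topology)"
proof -
  obtain \<U> where \<U>: "pi_base X \<U>" "omega_deep X \<U>" using assms by blast
  obtain P :: "nat \<Rightarrow> real set" where P: "pi_base rat_topology (range P)"
    using rat_topology_sequence_pi_base by blast
  have q: "range (from_nat_into \<rat>) = topspace rat_topology"
    by (simp add: range_from_nat_into_Rats topspace_rat_topology)
  show ?thesis
  proof (rule NWD_separable_prod_sequence_pi_base[OF \<U> t1_space_rat_topology _ q P])
    show "infinite J" if "openin rat_topology J" "J \<noteq> {}" for J
      using infinite_openin_rat_topology that .
  qed
qed

end
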